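(* For all integers $r,k\ge2$, the Milnor number $M_k^r=rN_k^r-N_{k+1}^r$ is positive (equivalently $N_{k+1}^r<rN_k^r$), except when $r=2$ and $k\in\{2,4,6\}$.
   Context: $N_k^r=\frac1k\sum_{d\mid k}\mu(d)\,r^{k/d}$ (Witt's formula for the number of basic commutators of length $k$ in $r$ variables), where $\mu$ is the Möbius function: $\mu(d)=1$ if $d=1$ or $d$ is a product of an even number of distinct primes, $\mu(d)=-1$ if $d$ is a product of an odd number of distinct primes, and $\mu(d)=0$ otherwise. *)

theory Defs
  imports "HOL-Computational_Algebra.Computational_Algebra"
begin

definition mu :: "nat \<Rightarrow> int" where
  "mu d = (if d > 0 \<and> squarefree d then (-1) ^ card (prime_factors d) else 0)"

definition witt_N :: "nat \<Rightarrow> nat \<Rightarrow> real" where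
  "witt_N k r = (1 / real k) * (\<Sum>d \<in> {d. d dvd k}. real_of_int (mu d) * real r ^ (k div d))"

definition milnor_M :: "nat \<Rightarrow> nat \<Rightarrow> real" where
  "milnor_M k r = real r * witt_N k r - witt_N (k + 1) r"

end

theory Submission
  imports Defs
begin

text \<open>Write \<open>k N\<^sub>k = r\<^sup>k + E\<^sub>k\<close>. Every divisor \<open>d > 1\<close> of \<open>k\<close> contributes an exponent
  \<open>k div d \<le> k div 2\<close>, and distinct divisors give distinct exponents, so
  \<open>|E\<^sub>k| \<le> r + \<dots> + r\<^bsup>k div 2\<^esup> \<le> 2 r\<^bsup>k div 2\<^esup>\<close>. Hence, with \<open>m = k div 2\<close>,
  \<open>k (k + 1) M\<^sub>k = (k + 1) r (k N\<^sub>k) - k ((k + 1) N\<^sub>k\<^sub>+\<^sub>1) \<ge> r\<^bsup>m+1\<^esup> (r\<^bsup>k-m\<^esup> - (4k + 2))\<close>,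
  which is positive unless \<open>k = 2\<close> or \<open>r \<le> 4, k \<le> 10\<close>. For \<open>k = 2\<close> one has
  \<open>M\<^sub>2 = r (r - 1) (r - 2) / 6\<close>; the remaining finitely many cases are evaluated exactly,
  \<open>2, \<dots>, 11\<close> being primes, prime powers or products of two primes.\<close>

text \<open>\<open>witt_sum k r = k N\<^sub>k\<^sup>r\<close>, the number of aperiodic words of length \<open>k\<close> over \<open>r\<close> letters.\<close>
definition witt_sum :: "nat \<Rightarrow> nat \<Rightarrow> real" where
  "witt_sum k r = (\<Sum>d | d dvd k. real_of_int (mu d) * real r ^ (k div d))"

lemma witt_N_eq_witt_sum: "witt_N k r = witt_sum k r / real k"
  by (simp add: witt_N_def witt_sum_def)

lemma mu_1 [simp]: "mu 1 = 1" "mu (Suc 0) = 1"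
  by (simp_all add: mu_def)

lemma mu_prime: "prime p \<Longrightarrow> mu p = -1"
  by (simp add: mu_def prime_gt_0_nat squarefree_prime prime_prime_factors)

lemma mu_mult_distinct_primes:
  assumes "prime p" "prime q" "p \<noteq> q"
  shows "mu (p * q) = 1"
proof -
  have "squarefree (p * q)"
    using assms by (simp add: squarefree_mult_coprime squarefree_prime primes_coprime)
  moreover have "prime_factors (p * q) = {p, q}"
    using assms by (auto simp: prime_factors_product prime_gt_0_nat prime_prime_factors)
  ultimately show ?thesis
    using assms by (simp add: mu_def prime_gt_0_nat)
qed

lemma mu_eq_0_if_square_dvd:
  assumes "prime p" "p * p dvd n"
  shows "mu n = 0"
proof -
  have "\<not> squarefree n"
    using assms by (auto simp: squarefree_def power2_eq_square)
  then show ?thesis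
    by (simp add: mu_def)
qed

lemma abs_mu_le_1: "\<bar>mu d\<bar> \<le> 1"
  by (simp add: mu_def abs_mult power_abs)

lemma witt_sum_prime:
  assumes "prime p"
  shows "witt_sum p r = real r ^ p - real r"
proof -
  have "{d. d dvd p} = {1, p}"
    using assms by (auto simp: prime_nat_iff)
  then show ?thesis
    using assms prime_gt_Suc_0_nat[OF assms] by (simp add: witt_sum_def mu_prime)
qed

lemma witt_sum_prime_power:
  assumes p: "prime p"
  shows "witt_sum (p ^ Suc n) r = real r ^ p ^ Suc n - real r ^ p ^ n"
proof -
  let ?f = "\<lambda>d. real_of_int (mu d) * real r ^ (p ^ Suc n div d)"
  have p1: "p > 1"
    using p by (rule prime_gt_1_nat)
  have "sum ?f {d. d dvd p ^ Suc n} = sum ?f {1, p}"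
  proof (rule sum.mono_neutral_right)
    show "finite {d. d dvd p ^ Suc n}"
      using p1 by simp
    show "{1, p} \<subseteq> {d. d dvd p ^ Suc n}"
      by auto
    show "\<forall>d\<in>{d. d dvd p ^ Suc n} - {1, p}. ?f d = 0"
    proof
      fix d assume d: "d \<in> {d. d dvd p ^ Suc n} - {1, p}"
      then obtain i where "d = p ^ i"
        using divides_primepow_nat[OF p] by blast
      moreover have "i \<noteq> 0" "i \<noteq> 1"
        using d \<open>d = p ^ i\<close> by auto
      ultimately have "p ^ 2 dvd d"
        by (simp add: le_imp_power_dvd)
      then have "p * p dvd d"
        by (simp add: power2_eq_square)
      then show "?f d = 0"
        using mu_eq_0_if_square_dvd[OF p] by simp
    qed
  qed
  also have "\<dots> = real r ^ p ^ Suc n - real r ^ p ^ n"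
    using p p1 by (simp add: mu_prime)
  finally show ?thesis
    by (simp add: witt_sum_def)
qed

lemma witt_sum_mult_distinct_primes:
  assumes p: "prime p" and q: "prime q" and "p \<noteq> q"
  shows "witt_sum (p * q) r = real r ^ (p * q) - real r ^ q - real r ^ p + real r"
proof -
  have p1: "p > 1" and q1: "q > 1"
    using p q by (simp_all add: prime_gt_Suc_0_nat)
  have "{d. d dvd p * q} = {1, p, q, p * q}"
  proof (intro set_eqI iffI)
    fix d assume "d \<in> {d. d dvd p * q}"
    then obtain a b where "d = a * b" "a dvd p" "b dvd q"
      using division_decomp by blast
    moreover have "a = 1 \<or> a = p" "b = 1 \<or> b = q"
      using p q \<open>a dvd p\<close> \<open>b dvd q\<close> by (auto simp: prime_nat_iff)
    ultimately show "d \<in> {1, p, q, p * q}"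
      by auto
  qed auto
  moreover have "p * q \<noteq> p" "p * q \<noteq> q" "p * q \<noteq> 1"
    using p1 q1 by simp_all
  ultimately show ?thesis
    using assms p1 q1 by (simp add: witt_sum_def mu_prime mu_mult_distinct_primes)
qed

lemmas witt_sum_small =
  witt_sum_prime[of 2, simplified] witt_sum_prime[of 3, simplified]
  witt_sum_prime[of 5, simplified] witt_sum_prime[of 7, simplified]
  witt_sum_prime[of 11, simplified]
  witt_sum_prime_power[of 2 1, simplified] witt_sum_prime_power[of 2 2, simplified]
  witt_sum_prime_power[of 3 1, simplified]
  witt_sum_mult_distinct_primes[of 2 3, simplified]
  witt_sum_mult_distinct_primes[of 2 5, simplified]

lemma sum_powers_le_double:
  fixes x :: real
  assumes "x \<ge> 2"
  shows "(\<Sum>j=1..m. x ^ j) \<le> 2 * x ^ m"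
proof (induction m)
  case (Suc m)
  have "(\<Sum>j=1..Suc m. x ^ j) \<le> 2 * x ^ m + x ^ Suc m"
    using Suc by simp
  also have "\<dots> \<le> 2 * x ^ Suc m"
    using assms by (simp add: mult_right_mono)
  finally show ?case .
qed simp

lemma witt_sum_close_to_power:
  assumes k: "k > 0" and r: "r \<ge> 2"
  shows "\<bar>witt_sum k r - real r ^ k\<bar> \<le> 2 * real r ^ (k div 2)"
proof -
  define D where "D = {d. d dvd k} - {1}"
  let ?g = "\<lambda>d. k div d"
  have fin: "finite {d. d dvd k}"
    using k by simp
  have "witt_sum k r - real r ^ k = (\<Sum>d\<in>D. real_of_int (mu d) * real r ^ ?g d)"
    unfolding witt_sum_def D_def by (subst sum.remove[OF fin, of 1]) auto
  also have "\<bar>\<dots>\<bar> \<le> (\<Sum>d\<in>D. real r ^ ?g d)"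
  proof (rule order_trans[OF sum_abs sum_mono])
    fix d
    have "\<bar>real_of_int (mu d)\<bar> \<le> 1"
      using abs_mu_le_1[of d] by linarith
    then show "\<bar>real_of_int (mu d) * real r ^ ?g d\<bar> \<le> real r ^ ?g d"
      by (simp add: abs_mult mult_left_le_one_le)
  qed
  also have "\<dots> = (\<Sum>j\<in>?g ` D. real r ^ j)"
  proof (rule sum.reindex[symmetric, unfolded comp_def], rule inj_on_inverseI)
    fix d assume "d \<in> D"
    then have "k = d * ?g d" "?g d > 0"
      using k by (auto simp: D_def)
    then show "k div ?g d = d"
      by (metis nonzero_mult_div_cancel_right less_not_refl)
  qed
  also have "\<dots> \<le> (\<Sum>j=1..k div 2. real r ^ j)"
  proof (rule sum_mono2)
    show "?g ` D \<subseteq> {1..k div 2}"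
    proof
      fix j assume "j \<in> ?g ` D"
      then obtain d where d: "d dvd k" "d \<noteq> 1" and j: "j = k div d"
        by (auto simp: D_def)
      then have "d \<ge> 2" "d \<le> k"
        using k by (auto simp: dvd_imp_le intro: Nat.gr0I)
      then show "j \<in> {1..k div 2}"
        using j by (simp add: div_le_mono2 Suc_le_eq div_greater_zero_iff)
    qed
  qed auto
  also have "\<dots> \<le> 2 * real r ^ (k div 2)"
    using r by (intro sum_powers_le_double) simp
  finally show ?thesis .
qed

lemma milnor_M_pos_if_power_large:
  assumes r: "r \<ge> 2" and k: "k > 0" and large: "4 * k + 2 < r ^ (k - k div 2)"
  shows "milnor_M k r > 0"
proof -
  define x where "x = real r"
  define m where "m = k div 2"
  have x: "x \<ge> 2"
    using r by (simp add: x_def)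
  have lower: "x ^ k - 2 * x ^ m \<le> witt_sum k r"
    using witt_sum_close_to_power[OF k r] by (simp add: x_def m_def)
  have "x ^ ((k + 1) div 2) \<le> x ^ (m + 1)"
    using x by (intro power_increasing) (auto simp: m_def)
  then have upper: "witt_sum (k + 1) r \<le> x ^ (k + 1) + 2 * x ^ (m + 1)"
    using witt_sum_close_to_power[of "k + 1" r] r by (simp add: x_def)
  have gap: "real (4 * k + 2) < x ^ (k - m)"
    using large unfolding x_def m_def by (metis of_nat_less_iff of_nat_power)
  have "k + 1 = (m + 1) + (k - m)"
    unfolding m_def by linarith
  then have split: "x ^ (k + 1) = x ^ (m + 1) * x ^ (k - m)"
    by (metis power_add)
  have "0 < x ^ (m + 1) * (x ^ (k - m) - (4 * k + 2))"
    using x gap by simp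
  also have "\<dots> = (k + 1) * x * (x ^ k - 2 * x ^ m) - k * (x ^ (k + 1) + 2 * x ^ (m + 1))"
    using split by (simp add: algebra_simps, argo)
  also have "\<dots> \<le> (k + 1) * x * witt_sum k r - k * witt_sum (k + 1) r"
    using lower upper x by (intro diff_mono mult_left_mono) auto
  also have "\<dots> = k * (k + 1) * milnor_M k r"
    using k by (simp add: milnor_M_def witt_N_eq_witt_sum x_def divide_simps) (simp add: algebra_simps)
  finally show ?thesis
    by (rule zero_less_mult_pos) (use k in \<open>simp add: add_pos_pos\<close>)
qed

lemma linear_less_power:
  fixes b c :: nat
  assumes "b \<ge> 2 \<and> c \<ge> 6 \<or> b \<ge> 3 \<and> c \<ge> 3"
  shows "8 * c + 2 < b ^ c"
  using assms
proof
  assume b: "b \<ge> 2 \<and> c \<ge> 6"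
  then have "6 \<le> c"
    by simp
  then have "8 * c + 2 < 2 ^ c"
    by (induction c rule: dec_induct) simp_all
  also have "\<dots> \<le> b ^ c"
    using b by (simp add: power_mono)
  finally show ?thesis .
next
  assume b: "b \<ge> 3 \<and> c \<ge> 3"
  then have "3 \<le> c"
    by simp
  then have "8 * c + 2 < 3 ^ c"
    by (induction c rule: dec_induct) simp_all
  also have "\<dots> \<le> b ^ c"
    using b by (simp add: power_mono)
  finally show ?thesis .
qed

lemma milnor_M_pos_outside_small_cases:
  assumes r: "r \<ge> 2" and k: "k \<ge> 3" and "k \<ge> 11 \<or> r \<ge> 3 \<and> k \<ge> 5 \<or> r \<ge> 5"
  shows "milnor_M k r > 0"
proof (rule milnor_M_pos_if_power_large[OF r])
  define c where "c = k - k div 2"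
  have "4 * k + 2 \<le> 8 * c + 2"
    unfolding c_def by linarith
  moreover have "8 * c + 2 < r ^ c \<or> (r \<ge> 5 \<and> k \<le> 4 \<and> c = 2)"
    using assms linear_less_power[of r c] unfolding c_def by linarith
  moreover have "5 ^ 2 \<le> r ^ 2" if "r \<ge> 5"
    using that by (rule power_mono) simp
  ultimately show "4 * k + 2 < r ^ (k - k div 2)"
    unfolding c_def by fastforce
qed (use k in simp)

lemma milnor_M_2: "milnor_M 2 r = real r * (real r - 1) * (real r - 2) / 6"
proof -
  have "milnor_M 2 r = real r * witt_sum 2 r / 2 - witt_sum 3 r / 3"
    by (simp add: milnor_M_def witt_N_eq_witt_sum)
  then show ?thesis
    by (simp add: witt_sum_small field_simps power2_eq_square power3_eq_cube)
qed

theorem lemma2p5: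
  fixes r k :: nat
  assumes "r \<ge> 2" and "k \<ge> 2"
  shows "milnor_M k r > 0 \<longleftrightarrow> \<not> (r = 2 \<and> k \<in> {2, 4, 6})"
proof -
  consider "k = 2" | "r \<le> 4" "3 \<le> k" "k \<le> 10"
    | "k \<ge> 3" "k \<ge> 11 \<or> r \<ge> 3 \<and> k \<ge> 5 \<or> r \<ge> 5"
    using assms by linarith
  then show ?thesis
  proof cases
    case 1
    moreover have "real r * (real r - 1) * (real r - 2) > 0" if "r \<noteq> 2"
      using assms that by simp
    ultimately show ?thesis
      using assms by (auto simp: milnor_M_2)
  next
    case 2
    then have "r = 2 \<or> r = 3 \<or> r = 4"
      and "k = 3 \<or> k = 4 \<or> k = 5 \<or> k = 6 \<or> k = 7 \<or> k = 8 \<or> k = 9 \<or> k = 10"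
      using assms by linarith+
    then show ?thesis
      by (elim disjE) (simp_all add: milnor_M_def witt_N_eq_witt_sum witt_sum_small)
  next
    case 3
    then show ?thesis
      using milnor_M_pos_outside_small_cases[OF assms(1)] by auto
  qed
qed

end
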